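(* Let $n\geq 2$ and let $L_n$ be the graph of linear $[n]$-phenylene (defined in the context). Then the base polynomial counting distances between pairs consisting of a degree-2 vertex and a degree-3 vertex of $L_n$ is \begin{eqnarray*} H^{2,3}_{b}(L_{n}) &=& 2(2n-2)x+4\sum_{k=2}^{n-1}(n-k+1)x^{3k-2}+4\sum_{k=1}^{n-1}(2n-2k+1)x^{3k-1}\\ &&+4\sum_{k=1}^{n-1}(n-k+2)x^{3k}+4x^{3n-2}. \end{eqnarray*}
   Context: All graphs are finite, simple and connected; $d(u,v)$ denotes the shortest-path distance and $d_u$ the degree of a vertex $u$. For a graph $G$ and degrees $p\le q$, the base polynomial is $H^{p,q}_{b}(G)=\sum x^{d(u,v)}$, where the sum runs over all unordered pairs $\{u,v\}$ of distinct vertices of $G$ such that one of $u,v$ has degree $p$ and the other has degree $q$. Linear $[n]$-phenylene $L_n$: take $n$ hexagons $H_1,\dots,H_n$; hexagon $H_i$ is the 6-cycle $a_i b_i c_i d_i e_i f_i a_i$. For each $i=1,\dots,n-1$ add the two edges $b_i f_{i+1}$ and $c_i e_{i+1}$, so that $b_i c_i e_{i+1} f_{i+1}$ is a 4-cycle joining consecutive hexagons. Thus $L_n$ has $6n$ vertices, $2n+4$ of degree 2 and $4n-4$ of degree 3. *)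

theory Defs
  imports Main "HOL-Computational_Algebra.Polynomial"
begin

definition walk :: "'a set \<Rightarrow> ('a \<Rightarrow> 'a \<Rightarrow> bool) \<Rightarrow> 'a list \<Rightarrow> bool" where
  "walk V E xs \<longleftrightarrow> xs \<noteq> [] \<and> set xs \<subseteq> V \<and> (\<forall>i. Suc i < length xs \<longrightarrow> E (xs ! i) (xs ! Suc i))"

definition gdist :: "'a set \<Rightarrow> ('a \<Rightarrow> 'a \<Rightarrow> bool) \<Rightarrow> 'a \<Rightarrow> 'a \<Rightarrow> nat" where
  "gdist V E u v = (LEAST k. \<exists>xs. walk V E xs \<and> hd xs = u \<and> last xs = v \<and> length xs = Suc k)"

definition gdeg :: "'a set \<Rightarrow> ('a \<Rightarrow> 'a \<Rightarrow> bool) \<Rightarrow> 'a \<Rightarrow> nat" where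
  "gdeg V E u = card {w \<in> V. E u w}"

definition base_pairs :: "'a set \<Rightarrow> ('a \<Rightarrow> 'a \<Rightarrow> bool) \<Rightarrow> nat \<Rightarrow> nat \<Rightarrow> 'a set set" where
  "base_pairs V E p q = {{u, v} | u v. u \<in> V \<and> v \<in> V \<and> u \<noteq> v \<and>
       gdeg V E u = p \<and> gdeg V E v = q}"

definition pair_dist :: "'a set \<Rightarrow> ('a \<Rightarrow> 'a \<Rightarrow> bool) \<Rightarrow> 'a set \<Rightarrow> nat" where
  "pair_dist V E e = (THE k. \<exists>u v. e = {u, v} \<and> k = gdist V E u v)"

definition base_poly :: "'a set \<Rightarrow> ('a \<Rightarrow> 'a \<Rightarrow> bool) \<Rightarrow> nat \<Rightarrow> nat \<Rightarrow> nat poly" where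
  "base_poly V E p q = (\<Sum>e \<in> base_pairs V E p q. monom 1 (pair_dist V E e))"

text \<open>Vertex (i, c) with 1 \<le> i \<le> n is the c-th vertex of hexagon H_i, where
  c = 0,1,2,3,4,5 stands for a,b,c,d,e,f.\<close>

definition phen_V :: "nat \<Rightarrow> (nat \<times> nat) set" where
  "phen_V n = {1..n} \<times> {0..<6}"

definition phen_E0 :: "nat \<Rightarrow> nat \<times> nat \<Rightarrow> nat \<times> nat \<Rightarrow> bool" where
  "phen_E0 n x y \<longleftrightarrow> x \<in> phen_V n \<and> y \<in> phen_V n \<and>
     ((fst x = fst y \<and> snd y = (snd x + 1) mod 6) \<comment> \<open>hexagon edges\<close>
      \<or> (fst y = fst x + 1 \<and> snd x = 1 \<and> snd y = 5) \<comment> \<open>b_i f_{i+1}\<close>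
      \<or> (fst y = fst x + 1 \<and> snd x = 2 \<and> snd y = 4))"

definition phen_E :: "nat \<Rightarrow> nat \<times> nat \<Rightarrow> nat \<times> nat \<Rightarrow> bool" where
  "phen_E n x y \<longleftrightarrow> phen_E0 n x y \<or> phen_E0 n y x"

end

theory Submission
  imports Defs
begin

(* Distances in L_n have a closed form (phen_dist): inside a hexagon the cyclic distance, and
   between H_i and H_j, i < j, the value 3(j - i) - 2 plus the distances of the end vertices to the
   bridges. It is verified through the characterisation of graph distance as the potential that
   drops by exactly one along some edge and by at most one along every edge. The degree-3 vertices
   are exactly the ends of bridges, so the pairs counted split by hexagons: the pairs inside single
   hexagons give 4(n-1)x + 4nx^2 + 4x^3 in total, and a pair of hexagons at distance k gives x^(3k-2) times
   a polynomial that only depends on whether the two hexagons are the first or the last one.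
   Summing over k and regrouping the exponents by blocks 3k-2, 3k-1, 3k gives the formula. *)

lemma walk_singleton [simp]: "walk V E [x] \<longleftrightarrow> x \<in> V"
  by (auto simp: walk_def)

lemma walk_Cons_Cons:
  "walk V E (x # y # ys) \<longleftrightarrow> x \<in> V \<and> E x y \<and> walk V E (y # ys)"
proof
  assume w: "walk V E (x # y # ys)"
  then have "E x y"
    unfolding walk_def by (metis length_Cons nth_Cons_0 nth_Cons_Suc zero_less_Suc Suc_less_eq)
  with w show "x \<in> V \<and> E x y \<and> walk V E (y # ys)"
    unfolding walk_def by auto
next
  assume h: "x \<in> V \<and> E x y \<and> walk V E (y # ys)"
  show "walk V E (x # y # ys)"
    unfolding walk_def
  proof (intro conjI allI impI)
    show "set (x # y # ys) \<subseteq> V"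
      using h by (auto simp: walk_def)
  next
    fix i assume "Suc i < length (x # y # ys)"
    then show "E ((x # y # ys) ! i) ((x # y # ys) ! Suc i)"
      using h by (cases i) (auto simp: walk_def)
  qed simp
qed

lemma potential_le_walk_length:
  assumes "D v v = 0"
    and "\<And>x y. E x y \<Longrightarrow> x \<in> V \<Longrightarrow> y \<in> V \<Longrightarrow> D x v \<le> D y v + 1"
    and "walk V E xs" "last xs = v"
  shows "D (hd xs) v \<le> length xs - 1"
  using assms(3,4)
proof (induction xs)
  case Nil
  then show ?case by (simp add: walk_def)
next
  case (Cons x ys)
  show ?case
  proof (cases ys)
    case Nil
    with Cons.prems assms(1) show ?thesis by simp
  next
    case (Cons y zs)
    with Cons.prems have "x \<in> V" "E x y" "walk V E ys" "y \<in> V"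
      by (auto simp: walk_Cons_Cons walk_def)
    with Cons.IH Cons.prems \<open>ys = y # zs\<close> assms(2)[of x y] show ?thesis
      by fastforce
  qed
qed

lemma walk_along_potential:
  assumes "D v v = 0" and "\<And>x. x \<in> V \<Longrightarrow> x \<noteq> v \<Longrightarrow> \<exists>y \<in> V. E x y \<and> D y v + 1 = D x v"
    and "v \<in> V" "x \<in> V"
  shows "\<exists>xs. walk V E xs \<and> hd xs = x \<and> last xs = v \<and> length xs = Suc (D x v)"
  using assms(4)
proof (induction "D x v" arbitrary: x)
  case 0
  have "x = v"
  proof (rule ccontr)
    assume "x \<noteq> v"
    with assms(2) \<open>x \<in> V\<close> obtain y where "D y v + 1 = D x v" by blast
    with 0 show False by simp
  qed
  with 0 show ?case
    by (intro exI[of _ "[x]"]) simp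
next
  case (Suc k)
  have "x \<noteq> v"
    using Suc.hyps(2) assms(1) by auto
  then obtain y where y: "y \<in> V" "E x y" "D y v + 1 = D x v"
    using assms(2) Suc.prems by blast
  with Suc.hyps(2) have "k = D y v" by simp
  with Suc.hyps(1) y(1) obtain ys
    where ys: "walk V E ys" "hd ys = y" "last ys = v" "length ys = Suc (D y v)"
    by blast
  then obtain zs where "ys = y # zs"
    by (cases ys) auto
  with ys y Suc.prems show ?case
    by (intro exI[of _ "x # ys"]) (auto simp: walk_Cons_Cons)
qed

lemma gdist_eqI:
  assumes "\<And>z. z \<in> V \<Longrightarrow> D z z = 0"
    and "\<And>x y z. E x y \<Longrightarrow> x \<in> V \<Longrightarrow> y \<in> V \<Longrightarrow> z \<in> V \<Longrightarrow> D x z \<le> D y z + 1"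
    and "\<And>x z. x \<in> V \<Longrightarrow> z \<in> V \<Longrightarrow> x \<noteq> z \<Longrightarrow> \<exists>y \<in> V. E x y \<and> D y z + 1 = D x z"
    and "u \<in> V" "v \<in> V"
  shows "gdist V E u v = D u v"
  unfolding gdist_def
proof (rule Least_equality)
  show "\<exists>xs. walk V E xs \<and> hd xs = u \<and> last xs = v \<and> length xs = Suc (D u v)"
    by (rule walk_along_potential) (use assms in auto)
next
  fix k assume "\<exists>xs. walk V E xs \<and> hd xs = u \<and> last xs = v \<and> length xs = Suc k"
  then obtain xs where "walk V E xs" "hd xs = u" "last xs = v" "length xs = Suc k"
    by blast
  with potential_le_walk_length[of D v E V xs] assms(1,2,5) show "D u v \<le> k"
    by auto
qed

lemma base_poly_eq_double_sum:
  assumes "p \<noteq> q"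
    and sym: "\<And>u v. u \<in> V \<Longrightarrow> v \<in> V \<Longrightarrow> gdist V E u v = gdist V E v u"
  shows "base_poly V E p q =
    (\<Sum>u \<in> {u \<in> V. gdeg V E u = p}. \<Sum>v \<in> {v \<in> V. gdeg V E v = q}. monom 1 (gdist V E u v))"
proof -
  let ?Vp = "{u \<in> V. gdeg V E u = p}" and ?Vq = "{v \<in> V. gdeg V E v = q}"
  let ?pair = "\<lambda>(u, v). {u, v}"
  have "base_pairs V E p q = {{u, v} | u v. u \<in> ?Vp \<and> v \<in> ?Vq}"
    unfolding base_pairs_def using assms(1) by blast
  also have "\<dots> = ?pair ` (?Vp \<times> ?Vq)"
    by (auto simp: image_iff)
  finally have pairs: "base_pairs V E p q = ?pair ` (?Vp \<times> ?Vq)" .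
  have inj: "inj_on ?pair (?Vp \<times> ?Vq)"
  proof (rule inj_onI)
    fix x y assume "x \<in> ?Vp \<times> ?Vq" "y \<in> ?Vp \<times> ?Vq" "?pair x = ?pair y"
    with assms(1) show "x = y"
      by (auto simp: doubleton_eq_iff)
  qed
  have dist: "pair_dist V E {u, v} = gdist V E u v" if "u \<in> V" "v \<in> V" for u v
    unfolding pair_dist_def
  proof (rule the_equality)
    fix k assume "\<exists>a b. {u, v} = {a, b} \<and> k = gdist V E a b"
    then show "k = gdist V E u v"
      using sym[OF that] by (auto simp: doubleton_eq_iff)
  qed blast
  have "base_poly V E p q = (\<Sum>x \<in> ?Vp \<times> ?Vq. monom 1 (pair_dist V E (?pair x)))"
    unfolding base_poly_def pairs by (rule sum.reindex[OF inj, unfolded comp_def])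
  also have "\<dots> = (\<Sum>(u, v) \<in> ?Vp \<times> ?Vq. monom 1 (gdist V E u v))"
    by (rule sum.cong) (auto simp: dist)
  finally show ?thesis
    by (simp add: sum.cartesian_product)
qed

definition cyc6_dist :: "nat \<Rightarrow> nat \<Rightarrow> nat" where
  "cyc6_dist c e = (let t = (if c \<le> e then e - c else c - e) in min t (6 - t))"

text \<open>Distance from slot \<open>c\<close> of \<open>H\<^sub>i\<close> to slot \<open>e\<close> of \<open>H\<^sub>i\<^sub>+\<^sub>1\<close>, not counting the
  bridge edge \<open>b\<^sub>i f\<^sub>i\<^sub>+\<^sub>1\<close> or \<open>c\<^sub>i e\<^sub>i\<^sub>+\<^sub>1\<close> that is used.\<close>
definition bridge_dist :: "nat \<Rightarrow> nat \<Rightarrow> nat" where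
  "bridge_dist c e = min (cyc6_dist c 1 + cyc6_dist 5 e) (cyc6_dist c 2 + cyc6_dist 4 e)"

text \<open>Going from \<open>H\<^sub>i\<close> to \<open>H\<^sub>j\<close>, \<open>i < j\<close>, takes \<open>j - i\<close> bridges and two steps inside each
  of the \<open>j - i - 1\<close> hexagons in between, hence the term \<open>3 (j - i) - 2\<close>.\<close>
fun phen_dist :: "nat \<times> nat \<Rightarrow> nat \<times> nat \<Rightarrow> nat" where
  "phen_dist (i, c) (j, e) =
    (if i = j then cyc6_dist c e
     else if i < j then 3 * (j - i) - 2 + bridge_dist c e
     else 3 * (i - j) - 2 + bridge_dist e c)"

lemma less_6_cases: "(c::nat) < 6 \<Longrightarrow> c = 0 \<or> c = 1 \<or> c = 2 \<or> c = 3 \<or> c = 4 \<or> c = 5"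
  by auto

lemma phen_dist_sym: "phen_dist x y = phen_dist y x"
  by (cases x; cases y) (auto simp: cyc6_dist_def)

lemma phen_dist_self [simp]: "phen_dist x x = 0"
  by (cases x) (simp add: cyc6_dist_def)

lemma slot_dist_hex_step:
  assumes "c < 6" "e < 6"
  shows "cyc6_dist c e \<le> cyc6_dist ((c + 1) mod 6) e + 1
    \<and> cyc6_dist ((c + 1) mod 6) e \<le> cyc6_dist c e + 1
    \<and> bridge_dist c e \<le> bridge_dist ((c + 1) mod 6) e + 1
    \<and> bridge_dist ((c + 1) mod 6) e \<le> bridge_dist c e + 1
    \<and> bridge_dist e c \<le> bridge_dist e ((c + 1) mod 6) + 1
    \<and> bridge_dist e ((c + 1) mod 6) \<le> bridge_dist e c + 1"
  using less_6_cases[OF assms(1)] less_6_cases[OF assms(2)]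
  by (elim disjE) (simp_all add: cyc6_dist_def bridge_dist_def Let_def split del: if_split)

lemma slot_dist_hex_descent:
  assumes "c < 6" "e < 6"
  shows "(c \<noteq> e \<longrightarrow> cyc6_dist ((c + 1) mod 6) e + 1 = cyc6_dist c e
                 \<or> cyc6_dist ((c + 5) mod 6) e + 1 = cyc6_dist c e)
    \<and> (c \<noteq> 1 \<and> c \<noteq> 2 \<longrightarrow> bridge_dist ((c + 1) mod 6) e + 1 = bridge_dist c e
                          \<or> bridge_dist ((c + 5) mod 6) e + 1 = bridge_dist c e)
    \<and> (c \<noteq> 4 \<and> c \<noteq> 5 \<longrightarrow> bridge_dist e ((c + 1) mod 6) + 1 = bridge_dist e c
                          \<or> bridge_dist e ((c + 5) mod 6) + 1 = bridge_dist e c)"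
  using less_6_cases[OF assms(1)] less_6_cases[OF assms(2)]
  by (elim disjE) (simp_all add: cyc6_dist_def bridge_dist_def Let_def split del: if_split)

lemma slot_dist_bridge:
  assumes "c = 1 \<or> c = 2" "e < 6"
  shows "bridge_dist c e = cyc6_dist (6 - c) e"
    and "bridge_dist e (6 - c) = cyc6_dist c e"
    and "bridge_dist (6 - c) e = bridge_dist c e + 2"
    and "bridge_dist e c = bridge_dist e (6 - c) + 2"
  using assms(1) less_6_cases[OF assms(2)]
  by (elim disjE; simp add: cyc6_dist_def bridge_dist_def Let_def split del: if_split)+

lemma mod6_succ_eq_iff:
  fixes c e :: nat
  assumes "c < 6" "e < 6"
  shows "c = (e + 1) mod 6 \<longleftrightarrow> e = (c + 5) mod 6"
  using less_6_cases[OF assms(1)] less_6_cases[OF assms(2)] by (elim disjE) simp_all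

lemma phen_V_iff [simp]: "(i, c) \<in> phen_V n \<longleftrightarrow> 1 \<le> i \<and> i \<le> n \<and> c < 6"
  by (auto simp: phen_V_def)

lemma phen_E_iff:
  "phen_E n (i, c) (j, e) \<longleftrightarrow> (i, c) \<in> phen_V n \<and> (j, e) \<in> phen_V n \<and>
     ((i = j \<and> (e = (c + 1) mod 6 \<or> e = (c + 5) mod 6))
      \<or> ((c = 1 \<or> c = 2) \<and> j = i + 1 \<and> e = 6 - c)
      \<or> ((c = 4 \<or> c = 5) \<and> j + 1 = i \<and> e = 6 - c))"
proof -
  have bridges:
    "((c = 1 \<or> c = 2) \<and> j = i + 1 \<and> e = 6 - c)
      \<longleftrightarrow> (j = i + 1 \<and> c = 1 \<and> e = 5) \<or> (j = i + 1 \<and> c = 2 \<and> e = 4)"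
    "((c = 4 \<or> c = 5) \<and> j + 1 = i \<and> e = 6 - c)
      \<longleftrightarrow> (i = j + 1 \<and> e = 1 \<and> c = 5) \<or> (i = j + 1 \<and> e = 2 \<and> c = 4)"
    by auto
  have "c < 6 \<Longrightarrow> e < 6 \<Longrightarrow> (j = i \<and> c = (e + 1) mod 6) \<longleftrightarrow> (i = j \<and> e = (c + 5) mod 6)"
    using mod6_succ_eq_iff[of c e] by auto
  then show ?thesis
    unfolding phen_E_def phen_E0_def bridges phen_V_iff fst_conv snd_conv by blast
qed

lemma phen_dist_hex_edge:
  assumes "c < 6" "e < 6"
  shows "phen_dist (i, c) (j, e) \<le> phen_dist (i, (c + 1) mod 6) (j, e) + 1
    \<and> phen_dist (i, (c + 1) mod 6) (j, e) \<le> phen_dist (i, c) (j, e) + 1"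
  using slot_dist_hex_step[OF assms] by (auto; linarith)

lemma phen_dist_bridge_edge:
  assumes "c = 1 \<or> c = 2" "e < 6"
  shows "phen_dist (i, c) (j, e) \<le> phen_dist (i + 1, 6 - c) (j, e) + 1
    \<and> phen_dist (i + 1, 6 - c) (j, e) \<le> phen_dist (i, c) (j, e) + 1"
  using slot_dist_bridge[OF assms] by (auto; linarith)

lemma phen_dist_edge_le:
  assumes "phen_E n x y" "z \<in> phen_V n"
  shows "phen_dist x z \<le> phen_dist y z + 1"
proof -
  obtain i c j e k f where xyz: "x = (i, c)" "y = (j, e)" "z = (k, f)"
    by (cases x, cases y, cases z)
  have "c < 6" "e < 6" "f < 6"
    using assms xyz by (auto simp: phen_E_iff)
  from assms(1) consider
      "i = j" "e = (c + 1) mod 6" | "i = j" "c = (e + 1) mod 6"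
    | "c = 1 \<or> c = 2" "j = i + 1" "e = 6 - c" | "e = 1 \<or> e = 2" "i = j + 1" "c = 6 - e"
    using mod6_succ_eq_iff[of c e] \<open>c < 6\<close> \<open>e < 6\<close> unfolding xyz phen_E_iff by fastforce
  then show ?thesis
  proof cases
    case 1
    with phen_dist_hex_edge[OF \<open>c < 6\<close> \<open>f < 6\<close>] show ?thesis
      unfolding xyz by simp
  next
    case 2
    with phen_dist_hex_edge[OF \<open>e < 6\<close> \<open>f < 6\<close>] show ?thesis
      unfolding xyz by simp
  next
    case 3
    with phen_dist_bridge_edge[OF _ \<open>f < 6\<close>] show ?thesis
      unfolding xyz by simp
  next
    case 4
    with phen_dist_bridge_edge[OF _ \<open>f < 6\<close>] show ?thesis
      unfolding xyz by simp
  qed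
qed

lemma phen_E_hex:
  assumes "(i, c) \<in> phen_V n"
  shows "phen_E n (i, c) (i, (c + 1) mod 6)" and "phen_E n (i, c) (i, (c + 5) mod 6)"
  using assms by (auto simp: phen_E_iff)

lemma phen_E_in_V: "phen_E n x y \<Longrightarrow> y \<in> phen_V n"
  by (auto simp: phen_E_def phen_E0_def)

lemma phen_hex_descent:
  assumes "(i, c) \<in> phen_V n"
    and "phen_dist (i, (c + 1) mod 6) z + 1 = phen_dist (i, c) z
       \<or> phen_dist (i, (c + 5) mod 6) z + 1 = phen_dist (i, c) z"
  shows "\<exists>y \<in> phen_V n. phen_E n (i, c) y \<and> phen_dist y z + 1 = phen_dist (i, c) z"
  using assms phen_E_hex[OF assms(1)] phen_E_in_V by blast

lemma phen_dist_descent_same: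
  assumes "(i, c) \<in> phen_V n" "(i, e) \<in> phen_V n" "c \<noteq> e"
  shows "\<exists>y \<in> phen_V n. phen_E n (i, c) y \<and> phen_dist y (i, e) + 1 = phen_dist (i, c) (i, e)"
  using assms slot_dist_hex_descent[of c e] by (intro phen_hex_descent) auto

lemma phen_dist_descent_right:
  assumes x: "(i, c) \<in> phen_V n" and z: "(j, e) \<in> phen_V n" and "i < j"
  shows "\<exists>y \<in> phen_V n. phen_E n (i, c) y \<and> phen_dist y (j, e) + 1 = phen_dist (i, c) (j, e)"
proof (cases "c = 1 \<or> c = 2")
  case True
  have "phen_E n (i, c) (i + 1, 6 - c)"
    using True x z \<open>i < j\<close> by (auto simp: phen_E_iff)
  moreover have "phen_dist (i + 1, 6 - c) (j, e) + 1 = phen_dist (i, c) (j, e)"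
    using slot_dist_bridge[OF True] z \<open>i < j\<close> by (cases "j = i + 1") auto
  ultimately show ?thesis
    using phen_E_in_V by blast
next
  case False
  with x z have "bridge_dist ((c + 1) mod 6) e + 1 = bridge_dist c e
      \<or> bridge_dist ((c + 5) mod 6) e + 1 = bridge_dist c e"
    using slot_dist_hex_descent[of c e] by auto
  with \<open>i < j\<close> show ?thesis
    by (intro phen_hex_descent[OF x]) (simp; arith)
qed

lemma phen_dist_descent_left:
  assumes x: "(i, c) \<in> phen_V n" and z: "(j, e) \<in> phen_V n" and "j < i"
  shows "\<exists>y \<in> phen_V n. phen_E n (i, c) y \<and> phen_dist y (j, e) + 1 = phen_dist (i, c) (j, e)"
proof (cases "c = 4 \<or> c = 5")
  case True
  then have bridge: "6 - c = 1 \<or> 6 - c = 2" "6 - (6 - c) = c"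
    by auto
  have "phen_E n (i, c) (i - 1, 6 - c)"
    using True x z \<open>j < i\<close> by (auto simp: phen_E_iff)
  moreover have "phen_dist (i - 1, 6 - c) (j, e) + 1 = phen_dist (i, c) (j, e)"
    using slot_dist_bridge[OF bridge(1)] z \<open>j < i\<close> unfolding bridge(2)
    by (cases "i = j + 1") auto
  ultimately show ?thesis
    using phen_E_in_V by blast
next
  case False
  with x z have "bridge_dist e ((c + 1) mod 6) + 1 = bridge_dist e c
      \<or> bridge_dist e ((c + 5) mod 6) + 1 = bridge_dist e c"
    using slot_dist_hex_descent[of c e] by auto
  with \<open>j < i\<close> show ?thesis
    by (intro phen_hex_descent[OF x]) (simp; arith)
qed

lemma gdist_phen_V:
  assumes "u \<in> phen_V n" "v \<in> phen_V n"
  shows "gdist (phen_V n) (phen_E n) u v = phen_dist u v"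
proof (rule gdist_eqI)
  fix x z assume "x \<in> phen_V n" "z \<in> phen_V n" "x \<noteq> z"
  moreover obtain i c j e where "x = (i, c)" "z = (j, e)"
    by (cases x, cases z)
  ultimately show "\<exists>y \<in> phen_V n. phen_E n x y \<and> phen_dist y z + 1 = phen_dist x z"
    using phen_dist_descent_same phen_dist_descent_right phen_dist_descent_left
    by (metis linorder_neqE_nat)
qed (use assms phen_dist_edge_le in auto)

text \<open>Slots 1, 2 (\<open>b\<^sub>i, c\<^sub>i\<close>) carry the bridges to the next hexagon, slots 4, 5
  (\<open>e\<^sub>i, f\<^sub>i\<close>) those to the previous one.\<close>
definition deg3_slots :: "bool \<Rightarrow> bool \<Rightarrow> nat set" where
  "deg3_slots at_start at_end = (if at_end then {} else {1, 2}) \<union> (if at_start then {} else {4, 5})"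

definition deg2_slots :: "bool \<Rightarrow> bool \<Rightarrow> nat set" where
  "deg2_slots at_start at_end =
    {0, 3} \<union> (if at_start then {4, 5} else {}) \<union> (if at_end then {1, 2} else {})"

lemma finite_deg2_slots [simp]: "finite (deg2_slots at_start at_end)"
  by (simp add: deg2_slots_def)

lemma finite_deg3_slots [simp]: "finite (deg3_slots at_start at_end)"
  by (simp add: deg3_slots_def)

lemma phen_neighbours:
  assumes "(i, c) \<in> phen_V n"
  shows "{w \<in> phen_V n. phen_E n (i, c) w} =
    {(i, (c + 1) mod 6), (i, (c + 5) mod 6)}
    \<union> (if (c = 1 \<or> c = 2) \<and> i < n then {(i + 1, 6 - c)} else {})
    \<union> (if (c = 4 \<or> c = 5) \<and> 1 < i then {(i - 1, 6 - c)} else {})"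
  using assms by (auto simp: phen_E_iff)

lemma gdeg_phen:
  assumes "(i, c) \<in> phen_V n"
  shows "gdeg (phen_V n) (phen_E n) (i, c) = (if c \<in> deg3_slots (i = 1) (i = n) then 3 else 2)"
proof -
  have "c < 6" "1 \<le> i" "i \<le> n"
    using assms by auto
  then show ?thesis
    unfolding gdeg_def phen_neighbours[OF assms] deg3_slots_def
    using less_6_cases[OF \<open>c < 6\<close>] by (elim disjE) auto
qed

lemma phen_V_deg2:
  "{u \<in> phen_V n. gdeg (phen_V n) (phen_E n) u = 2} = Sigma {1..n} (\<lambda>i. deg2_slots (i = 1) (i = n))"
proof (intro set_eqI iffI)
  fix u assume "u \<in> {u \<in> phen_V n. gdeg (phen_V n) (phen_E n) u = 2}"
  then show "u \<in> Sigma {1..n} (\<lambda>i. deg2_slots (i = 1) (i = n))"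
    using less_6_cases
    by (cases u) (auto simp: gdeg_phen deg2_slots_def deg3_slots_def split: if_splits)
next
  fix u assume "u \<in> Sigma {1..n} (\<lambda>i. deg2_slots (i = 1) (i = n))"
  then show "u \<in> {u \<in> phen_V n. gdeg (phen_V n) (phen_E n) u = 2}"
    by (cases u) (auto simp: gdeg_phen deg2_slots_def deg3_slots_def split: if_splits)
qed

lemma phen_V_deg3:
  "{u \<in> phen_V n. gdeg (phen_V n) (phen_E n) u = 3} = Sigma {1..n} (\<lambda>i. deg3_slots (i = 1) (i = n))"
proof (intro set_eqI iffI)
  fix u assume "u \<in> {u \<in> phen_V n. gdeg (phen_V n) (phen_E n) u = 3}"
  then show "u \<in> Sigma {1..n} (\<lambda>i. deg3_slots (i = 1) (i = n))"
    by (cases u) (auto simp: gdeg_phen split: if_splits)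
next
  fix u assume "u \<in> Sigma {1..n} (\<lambda>i. deg3_slots (i = 1) (i = n))"
  then show "u \<in> {u \<in> phen_V n. gdeg (phen_V n) (phen_E n) u = 3}"
    by (cases u) (auto simp: gdeg_phen deg3_slots_def split: if_splits)
qed

definition hex_pair_poly :: "nat \<Rightarrow> nat \<Rightarrow> nat \<Rightarrow> nat poly" where
  "hex_pair_poly n i j =
    (\<Sum>c \<in> deg2_slots (i = 1) (i = n). \<Sum>e \<in> deg3_slots (j = 1) (j = n).
       monom 1 (phen_dist (i, c) (j, e)))"

lemma sum_Sigma_iterated:
  "finite A \<Longrightarrow> (\<And>i. finite (B i)) \<Longrightarrow> sum f (Sigma A B) = (\<Sum>i \<in> A. \<Sum>c \<in> B i. f (i, c))"
  by (simp add: sum.Sigma)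

lemma base_poly_phen:
  "base_poly (phen_V n) (phen_E n) 2 3 = (\<Sum>i \<in> {1..n}. \<Sum>j \<in> {1..n}. hex_pair_poly n i j)"
proof -
  let ?V = "phen_V n" and ?E = "phen_E n"
  have sym: "gdist ?V ?E u v = gdist ?V ?E v u" if "u \<in> ?V" "v \<in> ?V" for u v
    using that by (simp add: gdist_phen_V phen_dist_sym)
  have "base_poly ?V ?E 2 3 = (\<Sum>u \<in> {u \<in> ?V. gdeg ?V ?E u = 2}. \<Sum>v \<in> {v \<in> ?V. gdeg ?V ?E v = 3}.
      monom 1 (gdist ?V ?E u v))"
    using base_poly_eq_double_sum[of 2 3 ?V ?E] sym by simp
  also have "\<dots> = (\<Sum>u \<in> {u \<in> ?V. gdeg ?V ?E u = 2}. \<Sum>v \<in> {v \<in> ?V. gdeg ?V ?E v = 3}.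
      monom 1 (phen_dist u v))"
    by (intro sum.cong refl) (simp add: gdist_phen_V)
  also have "\<dots> = (\<Sum>i \<in> {1..n}. \<Sum>c \<in> deg2_slots (i = 1) (i = n). \<Sum>j \<in> {1..n}.
      \<Sum>e \<in> deg3_slots (j = 1) (j = n). monom 1 (phen_dist (i, c) (j, e)))"
    unfolding phen_V_deg2 phen_V_deg3
    by (simp only: sum_Sigma_iterated finite_atLeastAtMost finite_deg2_slots finite_deg3_slots)
  also have "\<dots> = (\<Sum>i \<in> {1..n}. \<Sum>j \<in> {1..n}. hex_pair_poly n i j)"
    unfolding hex_pair_poly_def by (subst sum.swap) simp
  finally show ?thesis .
qed

lemma sum_square_split_diagonal:
  fixes g :: "nat \<Rightarrow> nat \<Rightarrow> 'a::comm_monoid_add"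
  shows "(\<Sum>i \<in> {1..n}. \<Sum>j \<in> {1..n}. g i j)
    = (\<Sum>i \<in> {1..n}. g i i) + (\<Sum>i \<in> {1..n}. \<Sum>j \<in> {i<..n}. g i j + g j i)"
proof (induction n)
  case 0
  then show ?case by simp
next
  case (Suc n)
  have upper: "(\<Sum>i \<in> {1..n}. \<Sum>j \<in> {i<..Suc n}. g i j + g j i)
      = (\<Sum>i \<in> {1..n}. \<Sum>j \<in> {i<..n}. g i j + g j i) + (\<Sum>i \<in> {1..n}. g i (Suc n) + g (Suc n) i)"
  proof -
    have "{i<..Suc n} = insert (Suc n) {i<..n}" if "i \<le> n" for i
      using that by auto
    then show ?thesis
      by (simp add: sum.distrib[symmetric] add.commute)
  qed
  show ?case
    using Suc.IH upper by (simp add: sum.distrib ac_simps)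
qed

lemma sum_upper_triangle_by_difference:
  fixes h :: "nat \<Rightarrow> nat \<Rightarrow> 'a::comm_monoid_add"
  shows "(\<Sum>i \<in> {1..n}. \<Sum>j \<in> {i<..n}. h i j) = (\<Sum>k \<in> {1..n - 1}. \<Sum>i \<in> {1..n - k}. h i (i + k))"
proof -
  have "(\<Sum>i \<in> {1..n}. \<Sum>j \<in> {i<..n}. h i j) = (\<Sum>(i, j) \<in> Sigma {1..n} (\<lambda>i. {i<..n}). h i j)"
    by (simp add: sum.Sigma)
  also have "\<dots> = (\<Sum>(k, i) \<in> Sigma {1..n - 1} (\<lambda>k. {1..n - k}). h i (i + k))"
    by (rule sum.reindex_bij_witness[where i = "\<lambda>(k, i). (i, i + k)" and j = "\<lambda>(i, j). (j - i, i)"])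
      auto
  also have "\<dots> = (\<Sum>k \<in> {1..n - 1}. \<Sum>i \<in> {1..n - k}. h i (i + k))"
    by (simp add: sum.Sigma)
  finally show ?thesis .
qed

definition cross_poly :: "bool \<Rightarrow> bool \<Rightarrow> nat poly" where
  "cross_poly at_start at_end =
     (\<Sum>c \<in> deg2_slots at_start False. \<Sum>e \<in> deg3_slots False at_end. monom 1 (bridge_dist c e))
   + (\<Sum>c \<in> deg2_slots False at_end. \<Sum>e \<in> deg3_slots at_start False. monom 1 (bridge_dist e c))"

lemma hex_pair_poly_cross:
  assumes "1 \<le> i" "i < j" "j \<le> n"
  shows "hex_pair_poly n i j + hex_pair_poly n j i
    = monom 1 (3 * (j - i) - 2) * cross_poly (i = 1) (j = n)"
proof -
  have flags: "(i = n) = False" "(j = 1) = False"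
    using assms by auto
  have "monom 1 (3 * (j - i) - 2 + b) = monom 1 (3 * (j - i) - 2) * monom (1::nat) b" for b
    by (simp add: mult_monom)
  with assms show ?thesis
    unfolding hex_pair_poly_def cross_poly_def flags
    by (simp add: distrib_left sum_distrib_left)
qed

lemma cross_poly_values:
  "cross_poly False False = monom 4 1 + monom 4 2 + monom 4 3 + monom 4 4"
  "cross_poly True False = monom 4 1 + monom 6 2 + monom 4 3 + monom 4 4 + monom 2 5"
  "cross_poly False True = monom 4 1 + monom 6 2 + monom 4 3 + monom 4 4 + monom 2 5"
  "cross_poly True True = monom 4 1 + monom 8 2 + monom 4 3"
  by (simp_all add: cross_poly_def deg2_slots_def deg3_slots_def bridge_dist_def cyc6_dist_def
      Let_def split del: if_split)
    (simp_all add: numeral_eq_Suc monom_Suc monom_0)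

lemma hex_pair_poly_self:
  assumes "1 < n"
  shows "hex_pair_poly n 1 1 = monom 2 1 + monom 4 2 + monom 2 3"
    and "hex_pair_poly n n n = monom 2 1 + monom 4 2 + monom 2 3"
    and "1 < i \<Longrightarrow> i < n \<Longrightarrow> hex_pair_poly n i i = monom 4 1 + monom 4 2"
  using assms
  by (simp_all add: hex_pair_poly_def deg2_slots_def deg3_slots_def cyc6_dist_def Let_def
      split del: if_split)
    (simp_all add: numeral_eq_Suc monom_Suc monom_0)

lemma sum_hex_pair_poly_diagonal:
  assumes "2 \<le> n"
  shows "(\<Sum>i \<in> {1..n}. hex_pair_poly n i i) = monom (4 * (n - 1)) 1 + monom (4 * n) 2 + monom 4 3"
proof -
  have "{1..n} = insert 1 (insert n {2..<n})" "1 < n"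
    using assms by auto
  then have "(\<Sum>i \<in> {1..n}. hex_pair_poly n i i)
      = hex_pair_poly n 1 1 + hex_pair_poly n n n + (\<Sum>i \<in> {2..<n}. hex_pair_poly n i i)"
    using assms by (simp add: add.assoc)
  also have "(\<Sum>i \<in> {2..<n}. hex_pair_poly n i i) = (\<Sum>i \<in> {2..<n}. monom 4 1 + monom 4 2)"
    using assms by (intro sum.cong) (auto simp: hex_pair_poly_self(3))
  also have "hex_pair_poly n 1 1 + hex_pair_poly n n n + (\<Sum>i \<in> {2..<n}. monom 4 1 + monom 4 2)
      = monom 2 1 + monom 4 2 + monom 2 3 + (monom 2 1 + monom 4 2 + monom 2 3)
      + of_nat (n - 2) * (monom 4 1 + monom 4 2)"
    using assms unfolding hex_pair_poly_self(1,2)[of n, OF \<open>1 < n\<close>] by simp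
  also have "\<dots> = monom (4 * (n - 1)) 1 + monom (4 * n) 2 + monom 4 3"
    using assms by (intro poly_eqI) (auto simp: of_nat_mult_conv_smult)
  finally show ?thesis .
qed

definition row_poly :: "nat \<Rightarrow> nat \<Rightarrow> nat poly" where
  "row_poly n k = (\<Sum>i \<in> {1..n - k}. hex_pair_poly n i (i + k) + hex_pair_poly n (i + k) i)"

text \<open>The right-hand side of the theorem consists of blocks with exponents \<open>3k - 2, 3k - 1, 3k\<close>.
  The pairs of hexagons at distance \<open>k\<close> fill the exponents \<open>3k - 1, 3k\<close> of block \<open>k\<close>
  (\<open>row_head\<close>) and spill over into block \<open>k + 1\<close> (\<open>row_tail\<close>).\<close>
definition row_head :: "nat \<Rightarrow> nat \<Rightarrow> nat poly" where
  "row_head n k = monom (4 * (n - k)) (3 * k - 1) + monom (4 * (n - k + 1)) (3 * k)"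

definition row_tail :: "nat \<Rightarrow> nat \<Rightarrow> nat poly" where
  "row_tail n k =
    monom (4 * (n - k)) (3 * k + 1) + monom (4 * (n - k)) (3 * k + 2) + monom 4 (3 * k + 3)"

lemma row_poly_eq_cross:
  assumes "1 \<le> k" "k < n"
  shows "row_poly n k = monom 1 (3 * k - 2) * (\<Sum>i \<in> {1..n - k}. cross_poly (i = 1) (i + k = n))"
  unfolding row_poly_def sum_distrib_left
proof (rule sum.cong)
  fix i assume "i \<in> {1..n - k}"
  with assms have "1 \<le> i" "i < i + k" "i + k \<le> n"
    by auto
  from hex_pair_poly_cross[OF this] show "hex_pair_poly n i (i + k) + hex_pair_poly n (i + k) i
      = monom 1 (3 * k - 2) * cross_poly (i = 1) (i + k = n)"
    by simp
qed simp

lemma sum_cross_poly_inner_row: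
  assumes "1 \<le> k" "k + 2 \<le> n"
  defines "m \<equiv> n - k - 2"
  shows "(\<Sum>i \<in> {1..n - k}. cross_poly (i = 1) (i + k = n))
    = monom (4 * m + 8) 1 + monom (4 * m + 12) 2 + monom (4 * m + 8) 3 + monom (4 * m + 8) 4
      + monom 4 5"
proof -
  have "{1..n - k} = insert 1 (insert (n - k) {2..<n - k})" "(n - k = 1) = False"
    using assms by auto
  moreover have "(\<Sum>i \<in> {2..<n - k}. cross_poly (i = 1) (i + k = n))
      = (\<Sum>i \<in> {2..<n - k}. cross_poly False False)"
  proof (rule sum.cong)
    fix i assume "i \<in> {2..<n - k}"
    then have "(i = 1) = False" "(i + k = n) = False"
      by auto
    then show "cross_poly (i = 1) (i + k = n) = cross_poly False False"
      by (simp only:)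
  qed simp
  ultimately have "(\<Sum>i \<in> {1..n - k}. cross_poly (i = 1) (i + k = n))
      = cross_poly True False + cross_poly False True + of_nat m * cross_poly False False"
    using assms by (simp add: add.assoc)
  also have "\<dots> = monom (4 * m + 8) 1 + monom (4 * m + 12) 2 + monom (4 * m + 8) 3
      + monom (4 * m + 8) 4 + monom 4 5"
    by (intro poly_eqI) (simp add: cross_poly_values of_nat_mult_conv_smult)
  finally show ?thesis .
qed

lemma row_poly_inner:
  assumes "1 \<le> k" "k + 2 \<le> n"
  shows "row_poly n k = row_head n k + row_tail n k"
proof -
  let ?m = "n - k - 2"
  have "row_poly n k = monom 1 (3 * k - 2) * (monom (4 * ?m + 8) 1 + monom (4 * ?m + 12) 2
      + monom (4 * ?m + 8) 3 + monom (4 * ?m + 8) 4 + monom 4 5)"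
    using row_poly_eq_cross sum_cross_poly_inner_row assms by simp
  also have "\<dots> = row_head n k + row_tail n k"
  proof -
    have "3 * k - 2 + 1 = 3 * k - 1" "3 * k - 2 + 2 = 3 * k" "3 * k - 2 + 3 = 3 * k + 1"
      "3 * k - 2 + 4 = 3 * k + 2" "3 * k - 2 + 5 = 3 * k + 3"
      "4 * ?m + 8 = 4 * (n - k)" "4 * ?m + 12 = 4 * (n - k + 1)"
      using assms by auto
    then show ?thesis
      unfolding row_head_def row_tail_def distrib_left mult_monom mult_1
      by (simp only: ac_simps)
  qed
  finally show ?thesis .
qed

lemma row_poly_last:
  assumes "2 \<le> n"
  shows "row_poly n (n - 1) = row_head n (n - 1) + monom 4 (3 * n - 2)"
proof -
  have "row_poly n (n - 1) = monom 1 (3 * (n - 1) - 2) * cross_poly True True"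
    using row_poly_eq_cross[of "n - 1" n] assms by simp
  also have "\<dots> = row_head n (n - 1) + monom 4 (3 * n - 2)"
  proof -
    have "3 * (n - 1) - 2 + 1 = 3 * (n - 1) - 1" "3 * (n - 1) - 2 + 2 = 3 * (n - 1)"
      "3 * (n - 1) - 2 + 3 = 3 * n - 2" "4 * (n - (n - 1)) = 4" "4 * (n - (n - 1) + 1) = 8"
      using assms by auto
    then show ?thesis
      unfolding row_head_def cross_poly_values distrib_left mult_monom mult_1
      by (simp only: ac_simps)
  qed
  finally show ?thesis .
qed

lemma base_poly_phen_rows:
  assumes "2 \<le> n"
  shows "base_poly (phen_V n) (phen_E n) 2 3 = monom (4 * (n - 1)) 1 + monom (4 * n) 2 + monom 4 3
    + (\<Sum>k = 1..n - 1. row_head n k) + (\<Sum>k = 1..n - 2. row_tail n k) + monom 4 (3 * n - 2)"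
proof -
  have "{1..n - 1} = insert (n - 1) {1..n - 2}" "n - 1 \<notin> {1..n - 2}"
    using assms by auto
  then have "(\<Sum>k = 1..n - 1. row_poly n k) = (\<Sum>k = 1..n - 2. row_poly n k) + row_poly n (n - 1)"
    by (simp add: add.commute)
  also have "\<dots> = (\<Sum>k = 1..n - 2. row_head n k + row_tail n k) + row_head n (n - 1)
      + monom 4 (3 * n - 2)"
  proof -
    have "(\<Sum>k = 1..n - 2. row_poly n k) = (\<Sum>k = 1..n - 2. row_head n k + row_tail n k)"
      using assms by (intro sum.cong refl) (auto simp: row_poly_inner)
    then show ?thesis
      unfolding row_poly_last[OF assms] by (simp only: add.assoc)
  qed
  also have "\<dots> = (\<Sum>k = 1..n - 1. row_head n k) + (\<Sum>k = 1..n - 2. row_tail n k)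
      + monom 4 (3 * n - 2)"
    using \<open>{1..n - 1} = insert (n - 1) {1..n - 2}\<close> \<open>n - 1 \<notin> {1..n - 2}\<close>
    by (simp add: sum.distrib ac_simps)
  finally have rows: "(\<Sum>k = 1..n - 1. row_poly n k) = \<dots>" .
  show ?thesis
    unfolding base_poly_phen sum_square_split_diagonal sum_upper_triangle_by_difference
      sum_hex_pair_poly_diagonal[OF assms] row_poly_def[symmetric] rows
    by (simp only: ac_simps)
qed

lemma sum_row_tail_shifted:
  assumes "2 \<le> n"
  shows "(\<Sum>k = 1..n - 2. row_tail n k) = (\<Sum>k = 2..n - 1.
    monom (4 * (n - k + 1)) (3 * k - 2) + monom (4 * (n - k + 1)) (3 * k - 1) + monom 4 (3 * k))"
    (is "_ = (\<Sum>k = 2..n - 1. ?T k)")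
proof -
  have "(\<Sum>k = 1..n - 2. row_tail n k) = (\<Sum>k = 1..n - 2. ?T (Suc k))"
  proof (rule sum.cong)
    fix k assume "k \<in> {1..n - 2}"
    then have "n - Suc k + 1 = n - k" "3 * Suc k - 2 = 3 * k + 1" "3 * Suc k - 1 = 3 * k + 2"
      "3 * Suc k = 3 * k + 3"
      by auto
    then show "row_tail n k = ?T (Suc k)"
      unfolding row_tail_def by (simp only:)
  qed simp
  also have "\<dots> = (\<Sum>k = Suc 1..Suc (n - 2). ?T k)"
    by (rule sum.shift_bounds_cl_Suc_ivl[symmetric])
  also have "{Suc 1..Suc (n - 2)} = {2..n - 1}"
    using assms by auto
  finally show ?thesis .
qed

lemma theorem2p2_rhs_rows:
  assumes "2 \<le> n"
  shows "monom (2 * (2 * n - 2)) 1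
    + (\<Sum>k = 2..n - 1. monom (4 * (n - k + 1)) (3 * k - 2))
    + (\<Sum>k = 1..n - 1. monom (4 * (2 * n - 2 * k + 1)) (3 * k - 1))
    + (\<Sum>k = 1..n - 1. monom (4 * (n - k + 2)) (3 * k))
    + monom 4 (3 * n - 2)
  = monom (4 * (n - 1)) 1 + monom (4 * n) 2 + monom 4 3
    + (\<Sum>k = 1..n - 1. row_head n k) + (\<Sum>k = 1..n - 2. row_tail n k) + monom 4 (3 * n - 2)"
proof -
  have peel: "(\<Sum>k = 1..n - 1. f k) = f 1 + (\<Sum>k = 2..n - 1. f k)" for f :: "nat \<Rightarrow> nat poly"
    using assms sum.atLeast_Suc_atMost[of 1 "n - 1" f] by (simp add: numeral_2_eq_2)
  have mid: "(\<Sum>k = 1..n - 1. monom (4 * (2 * n - 2 * k + 1)) (3 * k - 1))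
      = (\<Sum>k = 1..n - 1. monom (4 * (n - k)) (3 * k - 1))
        + (\<Sum>k = 1..n - 1. monom (4 * (n - k + 1)) (3 * k - 1))"
    unfolding sum.distrib[symmetric] add_monom by (rule sum.cong) auto
  have top: "(\<Sum>k = 1..n - 1. monom (4 * (n - k + 2)) (3 * k))
      = (\<Sum>k = 1..n - 1. monom (4 * (n - k + 1)) (3 * k)) + (\<Sum>k = 1..n - 1. monom 4 (3 * k))"
    unfolding sum.distrib[symmetric] add_monom by (rule sum.cong) auto
  have heads: "(\<Sum>k = 1..n - 1. row_head n k)
      = (\<Sum>k = 1..n - 1. monom (4 * (n - k)) (3 * k - 1))
        + (\<Sum>k = 1..n - 1. monom (4 * (n - k + 1)) (3 * k))"
    unfolding row_head_def sum.distrib ..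
  have tails: "(\<Sum>k = 1..n - 2. row_tail n k) = (\<Sum>k = 2..n - 1. monom (4 * (n - k + 1)) (3 * k - 2))
      + (\<Sum>k = 2..n - 1. monom (4 * (n - k + 1)) (3 * k - 1)) + (\<Sum>k = 2..n - 1. monom 4 (3 * k))"
    using sum_row_tail_shifted[OF assms] by (simp add: sum.distrib)
  have coeff1: "2 * (2 * n - 2) = 4 * (n - 1)"
    by simp
  show ?thesis
    unfolding coeff1 mid top heads tails
      peel[of "\<lambda>k. monom (4 * (n - k + 1)) (3 * k - 1)"] peel[of "\<lambda>k. monom 4 (3 * k)"]
    using assms by (simp add: ac_simps)
qed

theorem theorem2p2:
  fixes n :: nat
  assumes "n \<ge> 2"
  shows "base_poly (phen_V n) (phen_E n) 2 3 =
      monom (2 * (2 * n - 2)) 1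
    + (\<Sum>k = 2..n - 1. monom (4 * (n - k + 1)) (3 * k - 2))
    + (\<Sum>k = 1..n - 1. monom (4 * (2 * n - 2 * k + 1)) (3 * k - 1))
    + (\<Sum>k = 1..n - 1. monom (4 * (n - k + 2)) (3 * k))
    + monom 4 (3 * n - 2)"
  unfolding base_poly_phen_rows[OF assms] theorem2p2_rhs_rows[OF assms] ..

end
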